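(* Let $\varphi(z)=\dfrac{1+z}{\cos z}$ and $f(z)=z+\sum_{n=2}^\infty a_nz^n\in\mathcal{A}$. Then $f\in\mathcal{S}^*_{nc}$ if and only if $$\sum_{n=2}^\infty\bigl(\varphi(e^{i\theta})-n\bigr)a_nz^{n-1}+\varphi(e^{i\theta})\ne1\qquad\text{for all } z\in\mathbb{D},\ \theta\in[-\pi,\pi].$$
   Context: $\mathbb{D}$ is the open unit disk. $\mathcal{A}$ is the class of analytic $f$ on $\mathbb{D}$ with $f(0)=0$, $f'(0)=1$. For analytic $f,g$ on $\mathbb{D}$, $f\prec g$ means $f=g\circ\omega$ for some analytic $\omega:\mathbb{D}\to\mathbb{D}$ with $\omega(0)=0$. $\mathcal{S}^*_{nc}=\{f\in\mathcal{A}: zf'(z)/f(z)\prec (1+z)/\cos z\}$. *)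

theory Defs
  imports "HOL-Complex_Analysis.Complex_Analysis"
begin

definition phi_nc :: "complex \<Rightarrow> complex" where
  "phi_nc z = (1 + z) / cos z"

definition classA :: "(complex \<Rightarrow> complex) set" where
  "classA = {f. f holomorphic_on ball 0 1 \<and> f 0 = 0 \<and> deriv f 0 = 1}"

definition subordinate :: "(complex \<Rightarrow> complex) \<Rightarrow> (complex \<Rightarrow> complex) \<Rightarrow> bool" where
  "subordinate p g \<longleftrightarrow> (\<exists>w. w holomorphic_on ball 0 1 \<and> w ` ball 0 1 \<subseteq> ball 0 1 \<and> w 0 = 0
      \<and> (\<forall>z\<in>ball 0 1. p z = g (w z)))"

text \<open>z f'(z)/f(z), with its removable value 1 at z = 0 (since f(0)=0, f'(0)=1).\<close>
definition starlike_quot :: "(complex \<Rightarrow> complex) \<Rightarrow> complex \<Rightarrow> complex" where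
  "starlike_quot f z = (if z = 0 then 1 else z * deriv f z / f z)"

definition S_nc :: "(complex \<Rightarrow> complex) set" where
  "S_nc = {f \<in> classA. subordinate (starlike_quot f) phi_nc}"

end

(* Write f = z g. The series condition says that the quotient q = f'/g never takes a value
   phi u with |u| = 1, and that f' does not vanish where g does. As phi is univalent on the
   closed disc, subordination q = phi o w excludes such values. Conversely q starts at
   q 0 = 1 = phi 0 and, by connectedness, cannot leave phi(D) without meeting phi of the unit
   circle or passing through infinity; hence w = phi^-1 o q is a Schwarz function.

   Univalence of phi on the closed disc follows from Re phi' > 0 there (Noshiro-Warschawski).
   By the minimum principle it suffices to check Re phi' >= 1/100 on the unit circle, which is
   done with Taylor polynomials of the numerator and denominator of phi' and an explicit
   sum-of-squares certificate. *)

theory Submission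
  imports Defs
begin

section \<open>Power series with a prescribed tail\<close>

lemma sums_tail_divide:
  fixes a :: "nat \<Rightarrow> complex"
  assumes "(\<lambda>n. a (n + 2) * z ^ (n + 2)) sums (z * G - z)" and "z = 0 \<Longrightarrow> G = 1"
  shows "(\<lambda>n. a (n + 2) * z ^ (n + 1)) sums (G - 1)"
proof (cases "z = 0")
  case False
  have "(\<lambda>n. a (n + 2) * z ^ (n + 2) / z) sums ((z * G - z) / z)"
    using assms(1) by (rule sums_divide)
  moreover have "a (n + 2) * z ^ (n + 2) / z = a (n + 2) * z ^ (n + 1)" for n
    using False by (simp add: field_simps)
  moreover have "(z * G - z) / z = G - 1"
    using False by (simp add: field_simps)
  ultimately show ?thesis
    by simp
qed (use assms(2) in simp)

lemma sums_deriv_of_sums_tail: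
  fixes f :: "complex \<Rightarrow> complex" and a :: "nat \<Rightarrow> complex"
  assumes tail: "\<And>w. w \<in> ball 0 r \<Longrightarrow> (\<lambda>n. a (n + 2) * w ^ (n + 2)) sums (f w - w)"
    and "z \<in> ball 0 r"
  shows "(\<lambda>n. of_nat (n + 2) * a (n + 2) * z ^ (n + 1)) sums (deriv f z - 1)"
proof -
  define b where "b n = (if n < 2 then 0 else a n)" for n
  have b_sums: "(\<lambda>n. b n * w ^ n) sums (f w - w)" if "w \<in> ball 0 r" for w
    using tail[OF that] sums_zero_iff_shift[of 2 "\<lambda>n. b n * w ^ n"] by (simp add: b_def)
  then have summable: "summable (\<lambda>n. b n * w ^ n)" if "norm w < r" for w
    using that by (auto simp: sums_iff)
  have "((\<lambda>w. w + (\<Sum>n. b n * w ^ n)) has_field_derivative 1 + (\<Sum>n. diffs b n * z ^ n)) (at z)"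
    using assms(2) by (auto intro!: derivative_eq_intros termdiffs_strong'[where K = r] summable)
  then have "(f has_field_derivative 1 + (\<Sum>n. diffs b n * z ^ n)) (at z)"
  proof (rule has_field_derivative_transform_within_open[where S = "ball 0 r"])
    show "w + (\<Sum>n. b n * w ^ n) = f w" if "w \<in> ball 0 r" for w
      using b_sums[OF that] by (simp add: sums_iff)
  qed (use assms(2) in auto)
  then have "deriv f z - 1 = (\<Sum>n. diffs b n * z ^ n)"
    by (simp add: DERIV_imp_deriv)
  moreover have "summable (\<lambda>n. diffs b n * z ^ n)"
    using assms(2) by (intro termdiff_converges[where K = r] summable) auto
  ultimately have "(\<lambda>n. diffs b n * z ^ n) sums (deriv f z - 1)"
    by (simp add: summable_sums)
  then have "(\<lambda>n. diffs b (n + 1) * z ^ (n + 1)) sums (deriv f z - 1)"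
    by (subst sums_zero_iff_shift) (simp_all add: diffs_def b_def)
  then show ?thesis
    by (simp add: diffs_def b_def)
qed

lemma tail_series_plus_ne_1_iff:
  fixes a :: "nat \<Rightarrow> complex"
  assumes "(\<lambda>n. a (n + 2) * z ^ (n + 1)) sums (G - 1)"
    and "(\<lambda>n. of_nat (n + 2) * a (n + 2) * z ^ (n + 1)) sums (D - 1)"
  shows "(\<Sum>n. (c - of_nat (n + 2)) * a (n + 2) * z ^ (n + 1)) + c \<noteq> 1 \<longleftrightarrow> c * G \<noteq> D"
proof -
  have "(\<lambda>n. c * (a (n + 2) * z ^ (n + 1)) - of_nat (n + 2) * a (n + 2) * z ^ (n + 1))
      sums (c * (G - 1) - (D - 1))"
    using assms by (intro sums_diff sums_mult)
  then have "(\<Sum>n. (c - of_nat (n + 2)) * a (n + 2) * z ^ (n + 1)) = c * (G - 1) - (D - 1)"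
    by (simp add: sums_iff algebra_simps)
  then have "(\<Sum>n. (c - of_nat (n + 2)) * a (n + 2) * z ^ (n + 1)) + c - 1 = c * G - D"
    by (simp add: algebra_simps)
  then show ?thesis
    by (simp only: eq_iff_diff_eq_0[of _ 1] eq_iff_diff_eq_0[of "c * G"])
qed

lemma holomorphic_on_divide_by_z:
  assumes "f holomorphic_on ball 0 r" "f 0 = 0"
  shows "(\<lambda>z. if z = 0 then deriv f 0 else f z / z) holomorphic_on ball 0 r"
  using pole_lemma_open[OF assms(1) open_ball, of 0] by (rule holomorphic_transform) (simp add: assms(2))

section \<open>Univalence and subordination\<close>

lemma all_unit_circle_iff:
  "(\<forall>\<theta>\<in>{-pi..pi}. P (exp (\<i> * of_real \<theta>))) \<longleftrightarrow> (\<forall>u. cmod u = 1 \<longrightarrow> P u)"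
proof
  assume P: "\<forall>\<theta>\<in>{-pi..pi}. P (exp (\<i> * of_real \<theta>))"
  show "\<forall>u. cmod u = 1 \<longrightarrow> P u"
  proof (intro allI impI)
    fix u :: complex
    assume "cmod u = 1"
    then have "u = of_real (cmod u) * exp (\<i> * of_real (Arg u))"
      by (intro Arg_eq) auto
    then have "u = exp (\<i> * of_real (Arg u))"
      using \<open>cmod u = 1\<close> by simp
    moreover have "Arg u \<in> {-pi..pi}"
      using mpi_less_Arg[of u] Arg_le_pi[of u] by simp
    ultimately show "P u"
      using P by metis
  qed
qed (simp add: norm_exp_i_times)

lemma Re_ge_if_Re_ge_on_frontier:
  assumes "f holomorphic_on interior S" "continuous_on (closure S) f" "bounded S"
    and "\<And>w. w \<in> frontier S \<Longrightarrow> c \<le> Re (f w)" and "z \<in> S"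
  shows "c \<le> Re (f z)"
proof -
  have "norm (exp (- f z)) \<le> exp (- c)"
  proof (rule maximum_modulus_frontier[where f = "\<lambda>w. exp (- f w)"])
    show "(\<lambda>w. exp (- f w)) holomorphic_on interior S"
      using assms(1) by (intro holomorphic_intros)
    show "continuous_on (closure S) (\<lambda>w. exp (- f w))"
      using assms(2) by (intro continuous_intros)
  qed (use assms in \<open>auto simp: norm_exp_eq_Re\<close>)
  then show ?thesis
    by (simp add: norm_exp_eq_Re)
qed

lemma inj_on_if_Re_deriv_pos:
  fixes f :: "complex \<Rightarrow> complex"
  assumes "convex S" and deriv: "\<And>z. z \<in> S \<Longrightarrow> (f has_field_derivative f' z) (at z)"
    and pos: "\<And>z. z \<in> S \<Longrightarrow> 0 < Re (f' z)"
  shows "inj_on f S"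
proof (rule inj_onI, rule ccontr)
  fix z1 z2
  assume z1: "z1 \<in> S" and z2: "z2 \<in> S" and eq: "f z1 = f z2" and "z1 \<noteq> z2"
  define d where "d = z2 - z1"
  define h where "h t = Re (f (z1 + of_real t * d) / d)" for t :: real
  have "h 0 < h 1"
  proof (rule DERIV_pos_imp_increasing[where f = h])
    fix t :: real
    assume "0 \<le> t" "t \<le> 1"
    then have w: "z1 + of_real t * d \<in> S"
      using convexD_alt[OF \<open>convex S\<close> z1 z2, of t]
      by (simp add: d_def algebra_simps scaleR_conv_of_real)
    have "((\<lambda>s. f (z1 + s * d) / d) has_field_derivative f' (z1 + of_real t * d) * d / d)
        (at (of_real t))"
      by (intro DERIV_cdivide DERIV_chain2[where g = "\<lambda>s. z1 + s * d", OF deriv[OF w]])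
        (auto intro!: derivative_eq_intros)
    moreover have "d \<noteq> 0"
      using \<open>z1 \<noteq> z2\<close> by (simp add: d_def)
    ultimately have "((\<lambda>s. f (z1 + s * d) / d) has_field_derivative f' (z1 + of_real t * d))
        (at (of_real t))"
      by simp
    then have "((\<lambda>s. f (z1 + of_real s * d) / d) has_vector_derivative f' (z1 + of_real t * d)) (at t)"
      by (rule has_vector_derivative_real_field)
    then have "(h has_field_derivative Re (f' (z1 + of_real t * d))) (at t)"
      unfolding h_def by (rule has_field_derivative_Re)
    then show "\<exists>y. (h has_field_derivative y) (at t) \<and> 0 < y"
      using pos[OF w] by blast
  qed simp
  moreover have "h 0 = h 1"
    by (simp add: h_def d_def eq)
  ultimately show False
    by simp
qed

lemma open_quotient_preimage:
  fixes g d :: "'a::topological_space \<Rightarrow> 'b::real_normed_field"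
  assumes "open U" "continuous_on U g" "continuous_on U d" "open T"
  shows "open {z \<in> U. g z \<noteq> 0 \<and> d z / g z \<in> T}"
proof -
  have U0: "open (U \<inter> g -` (- {0}))" (is "open ?U0")
    using continuous_open_preimage[OF assms(2,1) open_Compl[OF closed_singleton]] .
  have "continuous_on ?U0 (\<lambda>z. d z / g z)"
    using assms(2,3) by (auto intro!: continuous_intros intro: continuous_on_subset)
  then have "open (?U0 \<inter> (\<lambda>z. d z / g z) -` T)"
    using U0 assms(4) by (rule continuous_open_preimage)
  moreover have "?U0 \<inter> (\<lambda>z. d z / g z) -` T = {z \<in> U. g z \<noteq> 0 \<and> d z / g z \<in> T}"
    by auto
  ultimately show ?thesis
    by simp
qed

lemma quotient_stays_in_open_set:
  fixes g d :: "'a::topological_space \<Rightarrow> complex"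
  assumes U: "connected U" "open U" and cont: "continuous_on U g" "continuous_on U d"
    and K: "compact K" "open Om" "Om \<subseteq> K"
    and no_common_zero: "\<And>z. z \<in> U \<Longrightarrow> g z = 0 \<Longrightarrow> d z \<noteq> 0"
    and avoids: "\<And>z. z \<in> U \<Longrightarrow> g z \<noteq> 0 \<Longrightarrow> d z / g z \<in> K \<Longrightarrow> d z / g z \<in> Om"
    and z0: "z0 \<in> U" "g z0 \<noteq> 0" "d z0 / g z0 \<in> Om"
    and "z \<in> U"
  shows "g z \<noteq> 0 \<and> d z / g z \<in> Om"
proof -
  obtain M where M: "M > 0" "\<And>y. y \<in> K \<Longrightarrow> cmod y \<le> M"
    using compact_imp_bounded[OF K(1)] by (auto simp: bounded_pos)
  define V where "V = {z \<in> U. g z \<noteq> 0 \<and> d z / g z \<in> Om}"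
  define W where "W = {z \<in> U. d z \<noteq> 0 \<and> g z / d z \<in> ball 0 (1 / (M + 1))}"
  define X where "X = {z \<in> U. g z \<noteq> 0 \<and> d z / g z \<in> - K}"
  have "open V" "open W" "open X"
    unfolding V_def W_def X_def
    by (rule open_quotient_preimage; use U(2) cont K(2) compact_imp_closed[OF K(1)] in auto)+
  moreover have "U \<subseteq> V \<union> (W \<union> X)"
    using no_common_zero avoids M(1) by (fastforce simp: V_def W_def X_def)
  \<comment> \<open>\<open>W\<close> is a neighbourhood of the zeros of \<open>g\<close> on which \<open>\<bar>d / g\<bar> > M\<close>.\<close>
  moreover have "V \<inter> W = {}"
  proof -
    have False if "z \<in> V" "z \<in> W" for z
    proof -
      have "cmod (d z / g z) \<le> M" "cmod (g z / d z) < 1 / (M + 1)" "g z \<noteq> 0" "d z \<noteq> 0"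
        using that M(2) K(3) by (auto simp: V_def W_def)
      then have "cmod (d z) \<le> M * cmod (g z)" "cmod (g z) + M * cmod (g z) < cmod (d z)"
        using M(1) by (simp_all add: norm_divide field_simps)
      then show False
        using norm_ge_zero[of "g z"] by linarith
    qed
    then show ?thesis by blast
  qed
  moreover have "V \<inter> X = {}"
    using K(3) by (auto simp: V_def X_def)
  ultimately have "V \<inter> U = {} \<or> (W \<union> X) \<inter> U = {}"
    by (intro connectedD[OF U(1)]) auto
  moreover have "z0 \<in> V"
    using z0 by (simp add: V_def)
  ultimately have "z \<in> V"
    using z0(1) \<open>z \<in> U\<close> \<open>U \<subseteq> V \<union> (W \<union> X)\<close> by blast
  then show ?thesis
    by (simp add: V_def)
qed

text \<open>At a zero \<open>z \<noteq> 0\<close> of \<open>g\<close> both sides are \<open>0\<close>, by the convention \<open>x / 0 = 0\<close>.\<close>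

lemma starlike_quot_eq_deriv_divide:
  assumes "f z = z * g z" "g 0 = 1" "deriv f 0 = 1"
  shows "starlike_quot f z = deriv f z / g z"
  using assms by (cases "z = 0") (simp_all add: starlike_quot_def)

lemma deriv_ne_if_subordinate_starlike_quot:
  assumes "subordinate (starlike_quot f) \<phi>" and "inj_on \<phi> (cball 0 1)"
    and "\<And>w. w \<in> ball 0 1 \<Longrightarrow> \<phi> w \<noteq> 0"
    and quot: "\<And>z. z \<in> ball 0 1 \<Longrightarrow> starlike_quot f z = deriv f z / g z"
    and "z \<in> ball 0 1" "cmod u = 1"
  shows "\<phi> u * g z \<noteq> deriv f z"
proof
  assume eq: "\<phi> u * g z = deriv f z"
  obtain w where "w ` ball 0 1 \<subseteq> ball 0 1" and w: "\<And>z. z \<in> ball 0 1 \<Longrightarrow> starlike_quot f z = \<phi> (w z)"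
    using assms(1) by (auto simp: subordinate_def)
  then have wz: "w z \<in> ball 0 1"
    using \<open>z \<in> ball 0 1\<close> by blast
  have "\<phi> (w z) = deriv f z / g z"
    using w quot \<open>z \<in> ball 0 1\<close> by simp
  show False
  proof (cases "g z = 0")
    case True
    then show False
      using \<open>\<phi> (w z) = deriv f z / g z\<close> assms(3)[OF wz] by simp
  next
    case False
    then have "\<phi> (w z) = \<phi> u"
      using \<open>\<phi> (w z) = deriv f z / g z\<close> eq[symmetric] by simp
    then have "w z = u"
      using inj_onD[OF assms(2)] wz \<open>cmod u = 1\<close> by auto
    then show False
      using wz \<open>cmod u = 1\<close> by simp
  qed
qed

lemma deriv_divide_in_image_if_deriv_ne:
  assumes \<phi>: "\<phi> holomorphic_on ball 0 1" "continuous_on (cball 0 1) \<phi>" "inj_on \<phi> (cball 0 1)"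
      "\<phi> 0 = 1"
    and f: "f holomorphic_on ball 0 1" "deriv f 0 = 1"
    and g: "g holomorphic_on ball 0 1" "g 0 = 1"
    and ne: "\<And>z u. z \<in> ball 0 1 \<Longrightarrow> cmod u = 1 \<Longrightarrow> \<phi> u * g z \<noteq> deriv f z"
    and "z \<in> ball 0 1"
  shows "g z \<noteq> 0 \<and> deriv f z / g z \<in> \<phi> ` ball 0 1"
proof (rule quotient_stays_in_open_set[where U = "ball 0 1" and g = g and d = "deriv f"
      and K = "\<phi> ` cball 0 1" and Om = "\<phi> ` ball 0 1"])
  show "continuous_on (ball 0 1) g" "continuous_on (ball 0 1) (deriv f)"
    using g(1) holomorphic_deriv[OF f(1)] by (auto intro: holomorphic_on_imp_continuous_on)
  show "compact (\<phi> ` cball 0 1)"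
    using \<phi>(2) by (intro compact_continuous_image) auto
  show "open (\<phi> ` ball 0 1)"
    using \<phi>(1) inj_on_subset[OF \<phi>(3) ball_subset_cball] by (intro open_mapping_thm3) auto
  show "deriv f z \<noteq> 0" if "z \<in> ball 0 1" "g z = 0" for z
    using ne[OF that(1), of 1] that(2) by simp
  show "deriv f z / g z \<in> \<phi> ` ball 0 1"
    if z: "z \<in> ball 0 1" and gz: "g z \<noteq> 0" and "deriv f z / g z \<in> \<phi> ` cball 0 1" for z
  proof -
    obtain y where y: "cmod y \<le> 1" "deriv f z / g z = \<phi> y"
      using \<open>deriv f z / g z \<in> \<phi> ` cball 0 1\<close> by auto
    then have "cmod y \<noteq> 1"
      using ne[OF z, of y] gz by (auto simp: field_simps)
    then show ?thesis
      using y by auto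
  qed
  show "deriv f 0 / g 0 \<in> \<phi> ` ball 0 1"
    using f(2) g(2) \<phi>(4) by force
qed (use assms g(2) in auto)

lemma subordinate_starlike_quot_if_deriv_ne:
  assumes \<phi>: "\<phi> holomorphic_on ball 0 1" "continuous_on (cball 0 1) \<phi>" "inj_on \<phi> (cball 0 1)"
      "\<phi> 0 = 1"
    and f: "f holomorphic_on ball 0 1" "deriv f 0 = 1"
    and g: "g holomorphic_on ball 0 1" "g 0 = 1"
    and quot: "\<And>z. z \<in> ball 0 1 \<Longrightarrow> starlike_quot f z = deriv f z / g z"
    and ne: "\<And>z u. z \<in> ball 0 1 \<Longrightarrow> cmod u = 1 \<Longrightarrow> \<phi> u * g z \<noteq> deriv f z"
  shows "subordinate (starlike_quot f) \<phi>"
proof -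
  have in_image: "g z \<noteq> 0 \<and> deriv f z / g z \<in> \<phi> ` ball 0 1" if "z \<in> ball 0 1" for z
    using deriv_divide_in_image_if_deriv_ne[OF \<phi> f g] ne that by blast
  obtain \<psi> where \<psi>: "\<psi> holomorphic_on \<phi> ` ball 0 1" "\<And>z. z \<in> ball 0 1 \<Longrightarrow> \<psi> (\<phi> z) = z"
    using holomorphic_has_inverse[OF \<phi>(1) open_ball inj_on_subset[OF \<phi>(3) ball_subset_cball]]
    by blast
  define w where "w z = \<psi> (deriv f z / g z)" for z
  have "w holomorphic_on ball 0 1"
    unfolding w_def using in_image f(1)
    by (intro holomorphic_on_compose_gen[OF _ \<psi>(1), unfolded o_def] holomorphic_intros g(1)) auto
  moreover have "w z \<in> ball 0 1 \<and> \<phi> (w z) = starlike_quot f z" if "z \<in> ball 0 1" for z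
    using in_image[OF that] \<psi>(2) quot[OF that] by (auto simp: w_def)
  moreover have "w 0 = 0"
    using \<psi>(2)[of 0] f(2) g(2) \<phi>(4) by (simp add: w_def)
  ultimately show ?thesis
    unfolding subordinate_def by (intro exI[of _ w]) auto
qed

section \<open>Real polynomials on the unit circle\<close>

fun rpoly_eval :: "real list \<Rightarrow> complex \<Rightarrow> complex" where
  "rpoly_eval [] z = 0"
| "rpoly_eval (c # p) z = of_real c + z * rpoly_eval p z"

lemma rpoly_eval_eq_sum: "rpoly_eval p z = (\<Sum>j<length p. of_real (p ! j) * z ^ j)"
  by (induction p) (simp_all add: sum.lessThan_Suc_shift sum_distrib_left algebra_simps del: sum.lessThan_Suc)

lemma norm_rpoly_eval_le:
  assumes "cmod z \<le> 1"
  shows "cmod (rpoly_eval p z) \<le> sum_list (map abs p)"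
proof (induction p)
  case (Cons c p)
  have "cmod (rpoly_eval (c # p) z) \<le> \<bar>c\<bar> + cmod z * cmod (rpoly_eval p z)"
    by (simp add: norm_triangle_le norm_mult)
  also have "\<dots> \<le> \<bar>c\<bar> + 1 * sum_list (map abs p)"
    using Cons assms by (intro add_mono mult_mono) auto
  finally show ?case by simp
qed simp

definition list_dot :: "real list \<Rightarrow> real list \<Rightarrow> real" where
  "list_dot p q = sum_list (map2 (*) p q)"

lemma list_dot_eq_sum: "list_dot p q = (\<Sum>i<min (length p) (length q). p ! i * q ! i)"
  by (simp add: list_dot_def sum_list_sum_nth atLeast0LessThan)

definition cross_corr :: "real list \<Rightarrow> real list \<Rightarrow> nat \<Rightarrow> real" where
  "cross_corr p q m = (if m = 0 then list_dot p q else list_dot (drop m p) q + list_dot p (drop m q))"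

lemma sum_shifted_products:
  "(\<Sum>j<length p. \<Sum>k<length q. if j = k + m then p ! j * q ! k else 0) = list_dot (drop m p) q"
proof -
  have "(\<Sum>j<length p. \<Sum>k<length q. if j = k + m then p ! j * q ! k else 0)
      = (\<Sum>k<length q. if k + m < length p then p ! (k + m) * q ! k else 0)"
    by (subst sum.swap) (simp add: sum.delta' if_distrib cong: if_cong)
  also have "\<dots> = (\<Sum>k<min (length p - m) (length q). p ! (k + m) * q ! k)"
    by (rule sum.mono_neutral_cong_right) auto
  finally show ?thesis
    by (simp add: list_dot_eq_sum) (intro sum.cong refl; auto simp: nth_drop add.commute)
qed

lemma cross_corr_eq_sum:
  "cross_corr p q m = (\<Sum>j<length p. \<Sum>k<length q. if (j - k) + (k - j) = m then p ! j * q ! k else 0)"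
proof (cases "m = 0")
  case True
  have "(\<Sum>j<length p. \<Sum>k<length q. if (j - k) + (k - j) = m then p ! j * q ! k else 0)
      = (\<Sum>j<length p. \<Sum>k<length q. if j = k + 0 then p ! j * q ! k else 0)"
    using True by (intro sum.cong refl) auto
  then show ?thesis
    using True by (simp only: sum_shifted_products cross_corr_def) simp
next
  case False
  have swapped: "(\<Sum>j<length p. \<Sum>k<length q. if k = j + m then p ! j * q ! k else 0)
      = list_dot p (drop m q)"
    using sum_shifted_products[where p = q and q = p and m = m]
    by (subst sum.swap) (simp add: list_dot_eq_sum mult.commute min.commute cong: if_cong)
  have "(\<Sum>j<length p. \<Sum>k<length q. if (j - k) + (k - j) = m then p ! j * q ! k else 0)
      = (\<Sum>j<length p. \<Sum>k<length q. (if j = k + m then p ! j * q ! k else 0)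
          + (if k = j + m then p ! j * q ! k else 0))"
    using False by (intro sum.cong refl) auto
  then show ?thesis
    using False by (simp only: sum.distrib sum_shifted_products swapped) (simp add: cross_corr_def)
qed

lemma Re_power_mult_cnj_power:
  assumes "cmod z = 1"
  shows "Re (z ^ j * cnj z ^ k) = Re (z ^ ((j - k) + (k - j)))"
proof -
  have unit: "z * cnj z = 1"
    using assms complex_norm_square[of z] by simp
  show ?thesis
  proof (cases "k \<le> j")
    case True
    then have "z ^ j * cnj z ^ k = z ^ (j - k) * (z * cnj z) ^ k"
      by (simp add: power_mult_distrib power_add[symmetric])
    then show ?thesis using True unit by simp
  next
    case False
    then have "z ^ j * cnj z ^ k = cnj (z ^ (k - j)) * (z * cnj z) ^ j"
      by (simp add: power_mult_distrib power_add[symmetric] mult_ac)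
    then show ?thesis using False unit by (simp del: complex_cnj_power)
  qed
qed

lemma Re_rpoly_eval_mult_cnj_circle:
  assumes "cmod z = 1" "length p \<le> R" "length q \<le> R"
  shows "Re (rpoly_eval p z * cnj (rpoly_eval q z)) = (\<Sum>m<R. cross_corr p q m * Re (z ^ m))"
proof -
  have "rpoly_eval p z * cnj (rpoly_eval q z)
      = (\<Sum>j<length p. \<Sum>k<length q. of_real (p ! j * q ! k) * (z ^ j * cnj z ^ k))"
    by (simp add: rpoly_eval_eq_sum sum_distrib_left sum_distrib_right mult_ac) (rule sum.swap)
  then have "Re (rpoly_eval p z * cnj (rpoly_eval q z))
      = (\<Sum>j<length p. \<Sum>k<length q. p ! j * q ! k * Re (z ^ j * cnj z ^ k))"
    by (simp add: Re_sum)
  also have "\<dots> = (\<Sum>j<length p. \<Sum>k<length q. p ! j * q ! k * Re (z ^ ((j - k) + (k - j))))"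
    by (simp only: Re_power_mult_cnj_power[OF assms(1)])
  also have "\<dots> = (\<Sum>j<length p. \<Sum>k<length q. \<Sum>m<R.
                   if (j - k) + (k - j) = m then p ! j * q ! k * Re (z ^ m) else 0)"
    using assms by (intro sum.cong refl) (auto simp: sum.delta)
  also have "\<dots> = (\<Sum>m<R. \<Sum>j<length p. \<Sum>k<length q.
                   if (j - k) + (k - j) = m then p ! j * q ! k * Re (z ^ m) else 0)"
    by (subst sum.swap) (rule sum.swap)
  also have "\<dots> = (\<Sum>m<R. cross_corr p q m * Re (z ^ m))"
    unfolding cross_corr_eq_sum sum_distrib_right by (auto intro!: sum.cong)
  finally show ?thesis .
qed

lemma Re_rpoly_eval_mult_cnj_ge_certificate:
  assumes "cmod z = 1" and "length p \<le> Suc R" "length q \<le> Suc R" "length h \<le> Suc R"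
  defines "c m \<equiv> cross_corr p q m - cross_corr h h m"
  shows "c 0 - (\<Sum>m<R. \<bar>c (Suc m)\<bar>) \<le> Re (rpoly_eval p z * cnj (rpoly_eval q z))"
proof -
  have "Re (rpoly_eval p z * cnj (rpoly_eval q z))
      = Re (rpoly_eval h z * cnj (rpoly_eval h z)) + (\<Sum>m<Suc R. c m * Re (z ^ m))"
    using assms Re_rpoly_eval_mult_cnj_circle[OF assms(1), of p "Suc R" q]
      Re_rpoly_eval_mult_cnj_circle[OF assms(1), of h "Suc R" h]
    by (simp only: c_def left_diff_distrib sum_subtractf)
  moreover have "0 \<le> Re (rpoly_eval h z * cnj (rpoly_eval h z))"
    by (simp add: complex_mult_cnj)
  moreover have "- \<bar>c (Suc m)\<bar> \<le> c (Suc m) * Re (z ^ Suc m)" for m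
  proof -
    have "\<bar>Re (z ^ Suc m)\<bar> \<le> cmod (z ^ Suc m)"
      by (rule abs_Re_le_cmod)
    also have "\<dots> = 1"
      using assms by (simp only: norm_power) simp
    finally have "\<bar>c (Suc m) * Re (z ^ Suc m)\<bar> \<le> \<bar>c (Suc m)\<bar>"
      by (simp add: abs_mult mult_left_le)
    then show ?thesis by linarith
  qed
  then have "c 0 - (\<Sum>m<R. \<bar>c (Suc m)\<bar>) \<le> (\<Sum>m<Suc R. c m * Re (z ^ m))"
    by (simp add: sum.lessThan_Suc_shift sum_negf[symmetric] sum_mono del: sum.lessThan_Suc)
  ultimately show ?thesis by linarith
qed

lemma abs_Re_mult_cnj_le: "\<bar>Re (a * cnj b)\<bar> \<le> cmod a * cmod b"
  using abs_Re_le_cmod[of "a * cnj b"] by (simp add: norm_mult)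

section \<open>The function phi\<close>

lemma cos_nonzero_if_norm_less:
  assumes "cmod z < pi / 2"
  shows "cos z \<noteq> 0"
proof
  assume "cos z = 0"
  then obtain n :: int where "z = of_real ((n + 1/2) * pi)"
    by (auto simp: cos_eq_0 algebra_simps)
  then have "cmod z = \<bar>n + 1/2\<bar> * pi"
    by (simp only: norm_of_real abs_mult) simp
  moreover have "1/2 \<le> \<bar>real_of_int n + 1/2\<bar>"
    by (cases "n \<ge> 0") auto
  then have "1/2 * pi \<le> \<bar>real_of_int n + 1/2\<bar> * pi"
    using pi_gt_zero by (intro mult_right_mono) auto
  ultimately show False
    using assms by simp
qed

lemma cos_nonzero_ball:
  fixes z :: complex
  assumes "z \<in> ball 0 (3/2)"
  shows "cos z \<noteq> 0"
proof (rule cos_nonzero_if_norm_less)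
  show "cmod z < pi / 2"
    using assms pi_gt3 by simp
qed

lemma phi_nc_0: "phi_nc 0 = 1"
  by (simp add: phi_nc_def)

lemma phi_nc_nonzero:
  assumes "w \<in> ball 0 1"
  shows "phi_nc w \<noteq> 0"
proof -
  have "1 + w \<noteq> 0"
    using assms by (auto simp: add_eq_0_iff)
  then show ?thesis
    using cos_nonzero_ball[of w] assms by (simp add: phi_nc_def)
qed

lemma phi_nc_holomorphic: "phi_nc holomorphic_on ball 0 (3/2)"
  unfolding phi_nc_def[abs_def] using cos_nonzero_ball by (intro holomorphic_intros) auto

lemma phi_nc_holomorphic_disc: "phi_nc holomorphic_on ball 0 1"
  by (rule holomorphic_on_subset[OF phi_nc_holomorphic]) auto

lemma continuous_on_phi_nc: "continuous_on (cball 0 1) phi_nc"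
  by (rule holomorphic_on_imp_continuous_on, rule holomorphic_on_subset[OF phi_nc_holomorphic]) auto

definition phi_nc_deriv :: "complex \<Rightarrow> complex" where
  "phi_nc_deriv z = (cos z + (1 + z) * sin z) / (cos z)\<^sup>2"

lemma has_field_derivative_phi_nc:
  assumes "cos z \<noteq> 0"
  shows "(phi_nc has_field_derivative phi_nc_deriv z) (at z)"
proof -
  have "((\<lambda>w. (1 + w) / cos w) has_field_derivative phi_nc_deriv z) (at z)"
    using assms by (auto intro!: derivative_eq_intros simp: phi_nc_deriv_def power2_eq_square)
  then show ?thesis
    by (simp add: phi_nc_def[abs_def])
qed

lemma phi_nc_deriv_holomorphic: "phi_nc_deriv holomorphic_on ball 0 (3/2)"
  unfolding phi_nc_deriv_def[abs_def] using cos_nonzero_ball by (intro holomorphic_intros) auto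

definition numer_taylor :: "real list" where
  "numer_taylor = [1, 1, 1/2, -1/6, -1/8, 1/120, 1/144, -1/5040, -1/5760]"

definition denom_taylor :: "real list" where
  "denom_taylor = [1, 0, -1, 0, 1/3, 0, -2/45, 0, 1/315, 0, -2/14175, 0, 2/467775]"

text \<open>Found numerically. With \<open>P\<close>, \<open>Q\<close>, \<open>H\<close> the polynomials with coefficient lists
  \<open>numer_taylor\<close>, \<open>denom_taylor\<close>, \<open>sos_certificate\<close>, the cosine polynomial
  \<open>Re (P z * cnj (Q z)) - \<bar>H z\<bar>\<^sup>2\<close> on \<open>\<bar>z\<bar> = 1\<close> has a constant coefficient exceeding
  the sum of the moduli of the others.\<close>

definition sos_certificate :: "real list" where
  "sos_certificate = [3069935/1073741824, 534739/268435456, -18584615/536870912,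
     -25988189/1073741824, 182683341/1073741824, 56401803/536870912, -85931497/536870912,
     179954749/1073741824, 550167553/1073741824]"

lemma rpoly_eval_numer_taylor:
  "rpoly_eval numer_taylor z
     = (\<Sum>k\<le>8. of_real (cos_coeff k) * z ^ k) + (1 + z) * (\<Sum>k\<le>8. of_real (sin_coeff k) * z ^ k)"
  by (simp add: atMost_nat_numeral cos_coeff_def sin_coeff_def fact_numeral numer_taylor_def)
    (simp add: algebra_simps power_numeral_reduce add_divide_distrib)

lemma rpoly_eval_denom_taylor:
  "rpoly_eval denom_taylor z = (1 + (\<Sum>k\<le>12. of_real (cos_coeff k) * (2 * z) ^ k)) / 2"
  by (simp add: atMost_nat_numeral cos_coeff_def fact_numeral denom_taylor_def)
    (simp add: algebra_simps power_numeral_reduce add_divide_distrib)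

lemma Re_numer_taylor_mult_cnj_denom_taylor:
  assumes "cmod z = 1"
  shows "997/10000 \<le> Re (rpoly_eval numer_taylor z * cnj (rpoly_eval denom_taylor z))"
proof -
  have "997/10000 \<le> (cross_corr numer_taylor denom_taylor 0 - cross_corr sos_certificate sos_certificate 0)
      - (\<Sum>m<12. \<bar>cross_corr numer_taylor denom_taylor (Suc m)
                    - cross_corr sos_certificate sos_certificate (Suc m)\<bar>)"
    by (simp add: lessThan_nat_numeral cross_corr_def list_dot_def
        numer_taylor_def denom_taylor_def sos_certificate_def)
  also have "\<dots> \<le> Re (rpoly_eval numer_taylor z * cnj (rpoly_eval denom_taylor z))"
    using assms by (intro Re_rpoly_eval_mult_cnj_ge_certificate)
      (simp_all add: numer_taylor_def denom_taylor_def sos_certificate_def)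
  finally show ?thesis .
qed

lemma exp_abs_Im_le_3: "cmod z \<le> 1 \<Longrightarrow> exp \<bar>Im z\<bar> \<le> 3"
proof -
  assume "cmod z \<le> 1"
  then have "exp \<bar>Im z\<bar> \<le> exp 1"
    using abs_Im_le_cmod[of z] by simp
  then show ?thesis
    using exp_le by linarith
qed

lemma numer_taylor_error:
  assumes "cmod z = 1"
  shows "cmod (cos z + (1 + z) * sin z - rpoly_eval numer_taylor z) \<le> 1/4000"
proof -
  define C where "C = (\<Sum>k\<le>8. of_real (cos_coeff k) * z ^ k)"
  define S where "S = (\<Sum>k\<le>8. of_real (sin_coeff k) * z ^ k)"
  have bound: "exp \<bar>Im z\<bar> * cmod z ^ Suc 8 / fact 8 \<le> 3 / 40320"
    using exp_abs_Im_le_3[of z] assms by (simp add: fact_numeral)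
  have C: "cmod (cos z - C) \<le> 3/40320"
    unfolding C_def using Taylor_cos bound by (rule order_trans)
  have S: "cmod (sin z - S) \<le> 3/40320"
    unfolding S_def using Taylor_sin bound by (rule order_trans)
  have "cos z + (1 + z) * sin z - rpoly_eval numer_taylor z = (cos z - C) + (1 + z) * (sin z - S)"
    unfolding rpoly_eval_numer_taylor C_def S_def by (simp add: algebra_simps)
  also have "cmod \<dots> \<le> cmod (cos z - C) + cmod (1 + z) * cmod (sin z - S)"
    by (metis norm_mult norm_triangle_ineq)
  also have "\<dots> \<le> 3/40320 + 2 * (3/40320)"
    using C S norm_triangle_ineq[of 1 z] assms by (intro add_mono mult_mono) auto
  finally show ?thesis by simp
qed

lemma denom_taylor_error:
  assumes "cmod z = 1"
  shows "cmod ((cos z)\<^sup>2 - rpoly_eval denom_taylor z) \<le> 1/10000"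
proof -
  define C where "C = (\<Sum>k\<le>12. of_real (cos_coeff k) * (2 * z) ^ k)"
  have "\<bar>Im (2 * z)\<bar> \<le> 1 + 1"
    using abs_Im_le_cmod[of z] assms by simp
  then have "exp \<bar>Im (2 * z)\<bar> \<le> exp 1 * exp 1"
    by (simp flip: exp_add)
  also have "\<dots> \<le> 3 * 3"
    using exp_le by (intro mult_mono) auto
  finally have bound: "exp \<bar>Im (2 * z)\<bar> * cmod (2 * z) ^ Suc 12 / fact 12 \<le> 1/5000"
    using assms by (simp add: fact_numeral norm_mult)
  have "cmod (cos (2 * z) - C) \<le> 1/5000"
    unfolding C_def using Taylor_cos bound by (rule order_trans)
  moreover have "(cos z)\<^sup>2 - rpoly_eval denom_taylor z = (cos (2 * z) - C) / 2"
    unfolding rpoly_eval_denom_taylor C_def cos_double_cos by (simp add: field_simps)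
  then have "cmod ((cos z)\<^sup>2 - rpoly_eval denom_taylor z) = cmod (cos (2 * z) - C) / 2"
    by (metis norm_divide norm_numeral)
  ultimately show ?thesis
    by linarith
qed

lemma norm_cos_square_circle_le:
  assumes "cmod z = 1"
  shows "cmod ((cos z)\<^sup>2) \<le> 12/5"
proof -
  have "cmod (rpoly_eval denom_taylor z) \<le> sum_list (map abs denom_taylor)"
    using assms by (intro norm_rpoly_eval_le) simp
  also have "\<dots> \<le> 239/100"
    by (simp add: denom_taylor_def)
  finally show ?thesis
    using denom_taylor_error[OF assms] norm_triangle_ineq2[of "(cos z)\<^sup>2" "rpoly_eval denom_taylor z"]
    by linarith
qed

lemma Re_numer_mult_cnj_denom_circle_ge:
  assumes "cmod z = 1"
  shows "9/100 \<le> Re ((cos z + (1 + z) * sin z) * cnj ((cos z)\<^sup>2))"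
proof -
  define N D P Q where "N = cos z + (1 + z) * sin z" and "D = (cos z)\<^sup>2"
    and "P = rpoly_eval numer_taylor z" and "Q = rpoly_eval denom_taylor z"
  have "cmod P \<le> sum_list (map abs numer_taylor)"
    using assms unfolding P_def by (intro norm_rpoly_eval_le) simp
  also have "\<dots> \<le> 3"
    by (simp add: numer_taylor_def)
  finally have "cmod P * cmod (D - Q) \<le> 3 * (1/10000)"
    using denom_taylor_error[OF assms] by (intro mult_mono) (auto simp: D_def Q_def)
  then have err_denom: "\<bar>Re (P * cnj (D - Q))\<bar> \<le> 3/10000"
    using abs_Re_mult_cnj_le[of P "D - Q"] by linarith
  have "cmod (N - P) * cmod D \<le> 1/4000 * (12/5)"
    using numer_taylor_error[OF assms] norm_cos_square_circle_le[OF assms]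
    by (intro mult_mono) (auto simp: N_def P_def D_def)
  then have err_numer: "\<bar>Re ((N - P) * cnj D)\<bar> \<le> 6/10000"
    using abs_Re_mult_cnj_le[of "N - P" D] by linarith
  have "Re (N * cnj D) = Re (P * cnj Q) + Re ((N - P) * cnj D) + Re (P * cnj (D - Q))"
    by (simp add: algebra_simps)
  then show ?thesis
    using Re_numer_taylor_mult_cnj_denom_taylor[OF assms] err_numer err_denom
    unfolding N_def D_def P_def Q_def abs_le_iff by linarith
qed

lemma Re_phi_nc_deriv_circle_ge:
  assumes "cmod z = 1"
  shows "1/100 \<le> Re (phi_nc_deriv z)"
proof -
  define N D where "N = cos z + (1 + z) * sin z" and "D = (cos z)\<^sup>2"
  have num: "9/100 \<le> Re (N * cnj D)" and den: "cmod D \<le> 12/5"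
    using Re_numer_mult_cnj_denom_circle_ge[OF assms] norm_cos_square_circle_le[OF assms]
    by (simp_all add: N_def D_def)
  then have "D \<noteq> 0"
    by auto
  have "phi_nc_deriv z = N * cnj D / of_real ((cmod D)\<^sup>2)"
    unfolding phi_nc_deriv_def N_def[symmetric] D_def[symmetric] by (rule complex_div_cnj)
  then have "Re (phi_nc_deriv z) = Re (N * cnj D) / (cmod D)\<^sup>2"
    by (simp only: Re_divide_of_real)
  moreover have "(9/100) / (12/5)\<^sup>2 \<le> Re (N * cnj D) / (cmod D)\<^sup>2"
    using num den \<open>D \<noteq> 0\<close> by (intro frac_le power_mono) auto
  moreover have "(1/100::real) \<le> (9/100) / (12/5)\<^sup>2"
    by (simp add: power2_eq_square)
  ultimately show ?thesis
    by linarith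
qed

lemma Re_phi_nc_deriv_ge:
  assumes "cmod z \<le> 1"
  shows "1/100 \<le> Re (phi_nc_deriv z)"
proof (rule Re_ge_if_Re_ge_on_frontier[where f = phi_nc_deriv and S = "cball 0 1"])
  have "phi_nc_deriv holomorphic_on cball 0 1"
    by (rule holomorphic_on_subset[OF phi_nc_deriv_holomorphic]) auto
  then show "phi_nc_deriv holomorphic_on interior (cball 0 1)"
    and "continuous_on (closure (cball 0 1)) phi_nc_deriv"
    by (auto intro: holomorphic_on_subset holomorphic_on_imp_continuous_on)
qed (use assms Re_phi_nc_deriv_circle_ge in auto)

lemma inj_on_phi_nc: "inj_on phi_nc (cball 0 1)"
proof (rule inj_on_if_Re_deriv_pos)
  fix z :: complex
  assume "z \<in> cball 0 1"
  then have "cmod z \<le> 1" and "cos z \<noteq> 0"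
    using cos_nonzero_ball[of z] by auto
  then show "(phi_nc has_field_derivative phi_nc_deriv z) (at z)"
    and "0 < Re (phi_nc_deriv z)"
    using has_field_derivative_phi_nc Re_phi_nc_deriv_ge[of z] by auto
qed simp

theorem mainTheorem15:
  fixes f :: "complex \<Rightarrow> complex" and a :: "nat \<Rightarrow> complex"
  assumes "f \<in> classA"
    and "\<And>z. z \<in> ball 0 1 \<Longrightarrow> (\<lambda>n. a (n + 2) * z ^ (n + 2)) sums (f z - z)"
  shows "f \<in> S_nc \<longleftrightarrow>
    (\<forall>z\<in>ball 0 1. \<forall>\<theta>\<in>{-pi..pi}.
       (\<Sum>n. (phi_nc (exp (\<i> * of_real \<theta>)) - of_nat (n + 2)) * a (n + 2) * z ^ (n + 1))
         + phi_nc (exp (\<i> * of_real \<theta>)) \<noteq> 1)"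
proof -
  have f: "f holomorphic_on ball 0 1" "f 0 = 0" "deriv f 0 = 1"
    using assms(1) by (auto simp: classA_def)
  define g where "g = (\<lambda>z. if z = 0 then deriv f 0 else f z / z)"
  have g: "g holomorphic_on ball 0 1" "g 0 = 1"
    using holomorphic_on_divide_by_z[OF f(1,2)] f(3) unfolding g_def by simp_all
  have fg: "f z = z * g z" for z
    by (simp add: g_def f(2))
  have series: "(\<Sum>n. (c - of_nat (n + 2)) * a (n + 2) * z ^ (n + 1)) + c \<noteq> 1
      \<longleftrightarrow> c * g z \<noteq> deriv f z" if "z \<in> ball 0 1" for z c
    using assms(2)[OF that] fg[of z] g(2)
    by (intro tail_series_plus_ne_1_iff sums_tail_divide sums_deriv_of_sums_tail[OF assms(2) that]) auto
  have quot: "starlike_quot f z = deriv f z / g z" for z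
    using fg g(2) f(3) by (rule starlike_quot_eq_deriv_divide)
  have "f \<in> S_nc \<longleftrightarrow> (\<forall>z\<in>ball 0 1. \<forall>u. cmod u = 1 \<longrightarrow> phi_nc u * g z \<noteq> deriv f z)"
    unfolding S_nc_def
    using assms(1) deriv_ne_if_subordinate_starlike_quot[OF _ inj_on_phi_nc phi_nc_nonzero quot]
      subordinate_starlike_quot_if_deriv_ne[OF phi_nc_holomorphic_disc continuous_on_phi_nc
        inj_on_phi_nc phi_nc_0 f(1,3) g quot]
    by blast
  also have "\<dots> \<longleftrightarrow> (\<forall>z\<in>ball 0 1. \<forall>\<theta>\<in>{-pi..pi}. phi_nc (exp (\<i> * of_real \<theta>)) * g z \<noteq> deriv f z)"
    by (intro ball_cong refl all_unit_circle_iff[symmetric])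
  finally show ?thesis
    using series by simp
qed

end
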